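(* Assume the setting described in the context. Then for all $t\in\{1,\ldots,T\}$, $x_0,x_t\in\mathbb{R}^d$ it holds that $$p^\emptyset_{t\mid 0}(x_t\mid x_0)=\mathcal N\big(x_t,\sqrt{\bar\alpha_t}\,x_0,(1-\bar\alpha_t)\mathrm I_d\big).$$
   Context: Let $d,\mathfrak d,T\in\mathbb{N}$ and let $(\Omega,\mathcal F,\mathbb P)$ be a probability space. For every $\theta\in\mathbb{R}^{\mathfrak d}\cup\{\emptyset\}$ let $X^\theta=(X^\theta_t)_{t\in\{0,1,\ldots,T\}}$ be an $\mathbb{R}^d$-valued stochastic process on $\Omega$, and assume that $(X^\theta)_{\theta\in\mathbb{R}^{\mathfrak d}}$ and $X^\emptyset$ are independent. For every $\theta\in\mathbb{R}^{\mathfrak d}\cup\{\emptyset\}$ let $p^\theta\colon(\mathbb{R}^d)^{T+1}\to(0,\infty)$ be measurable with $\mathbb P(X^\theta_0\in B_0,\ldots,X^\theta_T\in B_T)=\int_{B_0}\cdots\int_{B_T}p^\theta(x_0,\ldots,x_T)\,dx_0\cdots dx_T$ for all Borel sets $B_0,\ldots,B_T\subseteq\mathbb{R}^d$. For distinct $a_1,\ldots,a_S\in\{0,\ldots,T\}$ ($S\le T$) let $p^\theta_{a_1,\ldots,a_S}$ be the marginal density obtained by integrating $p^\theta(x_0,\ldots,x_T)$ over the remaining variables (and $p^\theta_{0,\ldots,T}=p^\theta$); for distinct $a_1,\ldots,a_S,b_1,\ldots,b_K\in\{0,\ldots,T\}$ with $S,K\in\{1,\ldots,T\}$ define $p^\theta_{a_1,\ldots,a_S\mid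 b_1,\ldots,b_K}(x_{a_1},\ldots,x_{a_S}\mid x_{b_1},\ldots,x_{b_K})=\frac{p^\theta_{a_1,\ldots,a_S,b_1,\ldots,b_K}(x_{a_1},\ldots,x_{b_K})}{p^\theta_{b_1,\ldots,b_K}(x_{b_1},\ldots,x_{b_K})}$. Let $\Pi\colon\mathbb{R}^d\to(0,\infty)$ with $p^\theta_T=\Pi$ for all $\theta\in\mathbb{R}^{\mathfrak d}$ (no Markov assumption is made). Let $\mathrm I_d$ be the identity and $\mathcal N(x,v,Q)=(2\pi)^{-d/2}\det(Q)^{-1/2}\exp(-\frac12(x-v)^\top Q^{-1}(x-v))$ for symmetric positive definite $Q$. Let $\sigma_1,\ldots,\sigma_T,\bar\alpha_1,\ldots,\bar\alpha_T\in(0,1)$ satisfy $\sigma_t^2\le1-\bar\alpha_{t-1}$ for all $t\in\{2,\ldots,T\}$. For every $\theta\in\mathbb{R}^{\mathfrak d}$ let $V^\theta\colon\mathbb{R}^d\times\{1,\ldots,T\}\to\mathbb{R}^d$ be a function and let $f^\theta\colon\mathbb{R}^d\times\{1,\ldots,T\}\to\mathbb{R}^d$ satisfy $f^\theta(x,t)=(\sqrt{\bar\alpha_t})^{-1}\big(x-\sqrt{1-\bar\alpha_t}\,V^\theta(x,t)\big)$. Assume for all $\theta\in\mathbb{R}^{\mathfrak d}$, $t\in\{2,\ldots,T\}$, $x_0,\ldots,x_T\in\mathbb{R}^d$: $p^\emptyset_{1,\ldots,T\mid 0}(x_1,\ldots,x_T\mid x_0)=p^\emptyset_{T\mid 0}(x_T\mid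 x_0)\prod_{s=2}^T p^\emptyset_{s-1\mid s,0}(x_{s-1}\mid x_s,x_0)$; $p^\emptyset_{T\mid 0}(x_T\mid x_0)=\mathcal N(x_T,\sqrt{\bar\alpha_T}x_0,(1-\bar\alpha_T)\mathrm I_d)$; $p^\emptyset_{t-1\mid t,0}(x_{t-1}\mid x_t,x_0)=\mathcal N\Big(x_{t-1},\sqrt{\bar\alpha_{t-1}}x_0+\sqrt{1-\bar\alpha_{t-1}-\sigma_t^2}\,\frac{x_t-\sqrt{\bar\alpha_t}x_0}{\sqrt{1-\bar\alpha_t}},\sigma_t^2\mathrm I_d\Big)$; $p^\theta(x_0,\ldots,x_T)=p^\theta_T(x_T)\prod_{s=1}^T p^\theta_{s-1\mid s}(x_{s-1}\mid x_s)$; $p^\theta_{t-1\mid t}(x_{t-1}\mid x_t)=p^\emptyset_{t-1\mid t,0}(x_{t-1}\mid x_t,f^\theta(x_t,t))$; and $p^\theta_{0\mid 1}(x_0\mid x_1)=\mathcal N(x_0,f^\theta(x_1,1),\sigma_1^2\mathrm I_d)$. *)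

theory Defs
  imports "HOL-Probability.Probability"
begin

text \<open>Trajectories (x_0,...,x_T) are represented as functions nat => real^'n; only the
values at indices 0..T matter.  A joint density p on (R^d)^(T+1) is a function on such
trajectories (it is only evaluated on arguments that are extensional on {0..T}).\<close>

definition marg :: "nat \<Rightarrow> ((nat \<Rightarrow> real^'n) \<Rightarrow> real) \<Rightarrow> nat set \<Rightarrow> (nat \<Rightarrow> real^'n) \<Rightarrow> real" where
  "marg T p A x =
     (if A = {0..T} then p (restrict x {0..T})
      else (\<integral>y. p (\<lambda>i. if i \<in> A then x i else y i) \<partial>(PiM ({0..T} - A) (\<lambda>_. lborel))))"

definition cond :: "nat \<Rightarrow> ((nat \<Rightarrow> real^'n) \<Rightarrow> real) \<Rightarrow> nat set \<Rightarrow> nat set \<Rightarrow> (nat \<Rightarrow> real^'n) \<Rightarrow> real" where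
  "cond T p A B x = marg T p (A \<union> B) x / marg T p B x"

definition gauss :: "real^'n \<Rightarrow> real^'n \<Rightarrow> real^'n^'n \<Rightarrow> real" where
  "gauss x v Q = (2 * pi) powr (- real CARD('n) / 2) * det Q powr (-1/2)
                 * exp (- (1/2) * ((x - v) \<bullet> (matrix_inv Q *v (x - v))))"

end

(* Downward induction on t, starting from the hypothesis for p_{T|0}.  If
   p_{t|0}(. | x_0) = N(sqrt(abar_t) x_0, (1 - abar_t) I), then p_{t-1|0} is obtained by
   integrating p_{t-1|t,0} p_{t|0} over x_t.  The mean of p_{t-1|t,0} is affine in x_t
   with slope c = sqrt(1 - abar_{t-1} - sigma_t^2) / sqrt(1 - abar_t), so the integral is
   a convolution of isotropic Gaussians: it is Gaussian with mean sqrt(abar_{t-1}) x_0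
   and variance sigma_t^2 + c^2 (1 - abar_t) = 1 - abar_{t-1}.  Isotropic Gaussians
   factor over coordinates, so the convolution reduces to the one-dimensional one. *)

theory Submission
  imports Defs
begin

lemma det_scaleR_mat1: "det ((s::real) *\<^sub>R mat 1 :: real^'n^'n) = s ^ CARD('n)"
  by (subst det_diagonal) (auto simp: mat_def)

lemma matrix_inv_scaleR_mat1:
  assumes "(s::real) \<noteq> 0"
  shows "matrix_inv (s *\<^sub>R mat 1 :: real^'n^'n) = inverse s *\<^sub>R mat 1"
  unfolding matrix_inv_def
proof (rule some_equality)
  show "(s *\<^sub>R mat 1) ** (inverse s *\<^sub>R mat 1) = (mat 1 :: real^'n^'n)
      \<and> (inverse s *\<^sub>R mat 1) ** (s *\<^sub>R mat 1) = (mat 1 :: real^'n^'n)"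
    using assms by (simp add: matrix_scalar_ac flip: scalar_matrix_assoc)
next
  fix B :: "real^'n^'n"
  assume "(s *\<^sub>R mat 1) ** B = mat 1 \<and> B ** (s *\<^sub>R mat 1) = mat 1"
  then have "s *\<^sub>R B = mat 1" by (simp flip: scalar_matrix_assoc)
  then show "B = inverse s *\<^sub>R mat 1" using assms by (metis scaleR_scaleR left_inverse scaleR_one)
qed

lemma gauss_scaleR_mat1:
  fixes z \<mu> :: "real^'n"
  assumes "s > 0"
  shows "gauss z \<mu> (s *\<^sub>R mat 1) = (\<Prod>b\<in>Basis. normal_density (\<mu> \<bullet> b) (sqrt s) (z \<bullet> b))"
proof -
  have quad: "(z - \<mu>) \<bullet> (matrix_inv (s *\<^sub>R mat 1) *v (z - \<mu>)) = (\<Sum>b\<in>Basis. (z \<bullet> b - \<mu> \<bullet> b)\<^sup>2) / s"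
    using assms
    by (simp add: matrix_inv_scaleR_mat1 flip: scaleR_matrix_vector_assoc)
       (subst euclidean_inner, simp add: power2_eq_square inner_diff_left field_simps)
  have "(1 / sqrt (2 * pi * s)) ^ CARD('n) = ((2 * pi * s) powr (-1/2)) ^ CARD('n)"
    using assms by (simp add: powr_minus_divide powr_half_sqrt)
  also have "\<dots> = (2 * pi) powr (- real CARD('n) / 2) * s powr (- real CARD('n) / 2)"
    using assms by (subst powr_power) (auto simp: powr_mult)
  also have "s powr (- real CARD('n) / 2) = (s ^ CARD('n)) powr (-1/2)"
    using assms by (simp add: powr_realpow[symmetric] powr_powr)
  finally have const: "(2 * pi) powr (- real CARD('n) / 2) * (s ^ CARD('n)) powr (-1/2)
      = (1 / sqrt (2 * pi * s)) ^ CARD('n)" by simp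
  have "gauss z \<mu> (s *\<^sub>R mat 1)
      = (1 / sqrt (2 * pi * s)) ^ CARD('n) * exp (\<Sum>b\<in>Basis. - (z \<bullet> b - \<mu> \<bullet> b)\<^sup>2 / (2 * s))"
    using assms unfolding gauss_def quad const[symmetric] det_scaleR_mat1
    by (simp add: sum_divide_distrib sum_negf mult.commute)
  then show ?thesis
    using assms by (simp add: exp_sum normal_density_def prod_dividef power_one_over)
qed

lemma gauss_scaleR_mat1_pos:
  fixes z \<mu> :: "real^'n"
  assumes "s > 0"
  shows "gauss z \<mu> (s *\<^sub>R mat 1) > 0"
  using assms by (simp add: gauss_scaleR_mat1 normal_density_pos prod_pos)

lemma borel_measurable_gauss[measurable (raw)]:
  fixes f g :: "'a \<Rightarrow> real^'n"
  assumes "f \<in> borel_measurable M" "g \<in> borel_measurable M"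
  shows "(\<lambda>u. gauss (f u) (g u) Q) \<in> borel_measurable M"
proof -
  have "(*v) (matrix_inv Q) \<in> borel_measurable borel"
    by (intro borel_measurable_continuous_onI linear_continuous_on
        matrix_vector_mul_bounded_linear)
  then show ?thesis unfolding gauss_def using assms by measurable
qed

lemma normal_density_affine_convolution:
  assumes s: "s > 0" and v: "v > 0"
  shows "(\<integral>\<^sup>+y. ennreal (normal_density (a + c * y) (sqrt s) z * normal_density m (sqrt v) y)
           \<partial>lborel)
       = ennreal (normal_density (a + c * m) (sqrt (s + c\<^sup>2 * v)) z)"
proof (cases "c = 0")
  case True
  then show ?thesis
    using v by (simp add: ennreal_mult nn_integral_cmult nn_integral_eq_integral)
next
  case False
  define w where "w = z - a - c * m"
  let ?f = "\<lambda>y. ennreal (normal_density (a + c * y) (sqrt s) z * normal_density m (sqrt v) y)"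
  have substituted: "\<bar>1/c\<bar> * (normal_density (a + c * (m + u / c)) (sqrt s) z
                                * normal_density m (sqrt v) (m + u / c))
      = normal_density 0 (sqrt s) (w - u) * normal_density 0 (\<bar>c\<bar> * sqrt v) u" for u
  proof -
    have "normal_density (a + c * (m + u / c)) (sqrt s) z = normal_density 0 (sqrt s) (w - u)"
      using False by (simp add: normal_density_def w_def algebra_simps)
    moreover have "\<bar>1/c\<bar> * normal_density m (sqrt v) (m + u / c)
        = normal_density 0 (\<bar>c\<bar> * sqrt v) u"
      using False v
      by (simp add: normal_density_def power_mult_distrib real_sqrt_mult power_divide field_simps)
    ultimately show ?thesis by (metis mult.left_commute)
  qed
  have "(\<integral>\<^sup>+y. ?f y \<partial>lborel) = \<bar>1/c\<bar> * (\<integral>\<^sup>+u. ?f (m + (1/c) * u) \<partial>lborel)"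
    using False by (intro nn_integral_real_affine) (auto simp: normal_density_def)
  also have "\<dots> = (\<integral>\<^sup>+u. ennreal \<bar>1/c\<bar> * ?f (m + u / c) \<partial>lborel)"
    by (subst nn_integral_cmult) (auto simp: normal_density_def)
  also have "\<dots> = (\<integral>\<^sup>+u. ennreal (normal_density 0 (sqrt s) (w - u)
                              * normal_density 0 (\<bar>c\<bar> * sqrt v) u) \<partial>lborel)"
    by (intro nn_integral_cong) (simp add: ennreal_mult[symmetric] flip: substituted)
  also have "\<dots> = ennreal (normal_density 0 (sqrt ((sqrt s)\<^sup>2 + (\<bar>c\<bar> * sqrt v)\<^sup>2)) w)"
    using conv_normal_density_zero_mean[of "sqrt s" "\<bar>c\<bar> * sqrt v"] s v False
    by (simp add: fun_eq_iff)
  also have "\<dots> = ennreal (normal_density (a + c * m) (sqrt (s + c\<^sup>2 * v)) z)"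
    using s v by (simp add: normal_density_def w_def power_mult_distrib algebra_simps)
  finally show ?thesis .
qed

lemma gauss_affine_convolution:
  fixes z a m :: "real^'n"
  assumes s: "s > 0" and v: "v > 0"
  shows "(\<integral>\<^sup>+y. ennreal (gauss z (a + c *\<^sub>R y) (s *\<^sub>R mat 1) * gauss y m (v *\<^sub>R mat 1)) \<partial>lborel)
       = ennreal (gauss z (a + c *\<^sub>R m) ((s + c\<^sup>2 * v) *\<^sub>R mat 1))"
proof -
  define F where "F b u = ennreal (normal_density (a \<bullet> b + c * u) (sqrt s) (z \<bullet> b)
                                  * normal_density (m \<bullet> b) (sqrt v) u)" for b u
  have "(\<integral>\<^sup>+y. ennreal (gauss z (a + c *\<^sub>R y) (s *\<^sub>R mat 1) * gauss y m (v *\<^sub>R mat 1)) \<partial>lborel)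
      = (\<integral>\<^sup>+y. (\<Prod>b\<in>Basis. F b (y \<bullet> b)) \<partial>lborel)"
    using s v by (simp add: F_def gauss_scaleR_mat1 prod.distrib inner_add_left prod_ennreal)
  also have "\<dots> = (\<Prod>b\<in>Basis. (\<integral>\<^sup>+u. F b u \<partial>lborel))"
    by (rule nn_integral_lborel_prod) (auto simp: F_def normal_density_def)
  also have "\<dots> = (\<Prod>b\<in>Basis.
      ennreal (normal_density ((a + c *\<^sub>R m) \<bullet> b) (sqrt (s + c\<^sup>2 * v)) (z \<bullet> b)))"
    unfolding F_def using s v by (simp add: normal_density_affine_convolution inner_add_left)
  also have "\<dots> = ennreal (gauss z (a + c *\<^sub>R m) ((s + c\<^sup>2 * v) *\<^sub>R mat 1))"
    using s v by (simp add: gauss_scaleR_mat1 prod_ennreal add_pos_nonneg)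
  finally show ?thesis .
qed

(* Nonnegative integrals let Tonelli integrate out one coordinate at a time without
   integrability side conditions.  No case split on A = {0..T} is needed: the integral over
   the one-point space PiM {} evaluates q at restrict x {0..T}. *)
definition marg_nn ::
    "nat \<Rightarrow> ((nat \<Rightarrow> real^'n) \<Rightarrow> real) \<Rightarrow> nat set \<Rightarrow> (nat \<Rightarrow> real^'n) \<Rightarrow> ennreal" where
  "marg_nn T q A x =
     (\<integral>\<^sup>+y. ennreal (q (\<lambda>i. if i \<in> A then x i else y i)) \<partial>(PiM ({0..T} - A) (\<lambda>_. lborel)))"

lemma product_sigma_finite_lborel:
  "product_sigma_finite (\<lambda>_::'i. (lborel :: 'a::euclidean_space measure))"
  by (simp add: product_sigma_finite_def lborel.sigma_finite_measure_axioms)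

lemma measurable_fill_coordinates:
  fixes x :: "nat \<Rightarrow> real^'n"
  assumes "A \<subseteq> {0..T}"
  shows "(\<lambda>y i. if i \<in> A then x i else y i)
      \<in> PiM ({0..T} - A) (\<lambda>_. (lborel :: (real^'n) measure)) \<rightarrow>\<^sub>M PiM {0..T} (\<lambda>_. lborel)"
proof (rule measurable_PiM_single')
  show "(\<lambda>y i. if i \<in> A then x i else y i) \<in> space (PiM ({0..T} - A) (\<lambda>_. lborel))
      \<rightarrow> (\<Pi>\<^sub>E i\<in>{0..T}. space (lborel :: (real^'n) measure))"
    using assms by (auto simp: space_PiM PiE_def extensional_def)
next
  fix i assume "i \<in> {0..T}"
  then show "(\<lambda>y. if i \<in> A then x i else y i) \<in> PiM ({0..T} - A) (\<lambda>_. lborel) \<rightarrow>\<^sub>M lborel"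
    by (cases "i \<in> A") auto
qed

lemma marg_eq_enn2real_marg_nn:
  fixes q :: "(nat \<Rightarrow> real^'n) \<Rightarrow> real"
  assumes "q \<in> borel_measurable (PiM {0..T} (\<lambda>_. lborel))" "\<And>x. q x \<ge> 0" "A \<subseteq> {0..T}"
  shows "marg T q A x = enn2real (marg_nn T q A x)"
proof (cases "A = {0..T}")
  case True
  interpret product_sigma_finite "\<lambda>_::nat. (lborel :: (real^'n) measure)"
    by (rule product_sigma_finite_lborel)
  have "(\<lambda>i. if i \<in> {0..T} then x i else undefined) = restrict x {0..T}"
    by (simp add: restrict_def)
  then show ?thesis
    using True assms(2) by (simp add: marg_def marg_nn_def nn_integral_empty)
next
  case False
  have "(\<lambda>y. q (\<lambda>i. if i \<in> A then x i else y i))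
      \<in> borel_measurable (PiM ({0..T} - A) (\<lambda>_. lborel))"
    using measurable_comp[OF measurable_fill_coordinates[OF assms(3)] assms(1)]
    by (simp add: comp_def)
  then show ?thesis
    using False assms(2) by (simp add: marg_def marg_nn_def integral_eq_nn_integral)
qed

lemma marg_nn_eq_ennreal_marg:
  fixes q :: "(nat \<Rightarrow> real^'n) \<Rightarrow> real"
  assumes "q \<in> borel_measurable (PiM {0..T} (\<lambda>_. lborel))" "\<And>x. q x \<ge> 0" "A \<subseteq> {0..T}"
    and "marg T q A x > 0"
  shows "marg_nn T q A x = ennreal (marg T q A x)"
  using assms marg_eq_enn2real_marg_nn[OF assms(1-3)]
  by (cases "marg_nn T q A x") auto

lemma marg_fun_upd_notin:
  assumes "j \<notin> A"
  shows "marg T q A (x(j := u)) = marg T q A x"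
proof -
  have "(\<lambda>i. if i \<in> A then (x(j := u)) i else y i) = (\<lambda>i. if i \<in> A then x i else y i)" for y
    using assms by auto
  moreover have "A = {0..T} \<Longrightarrow> restrict (x(j := u)) {0..T} = restrict x {0..T}"
    using assms by (auto simp: restrict_def)
  ultimately show ?thesis by (simp add: marg_def)
qed

lemma marg_nn_integrate_coordinate:
  fixes q :: "(nat \<Rightarrow> real^'n) \<Rightarrow> real"
  assumes q: "q \<in> borel_measurable (PiM {0..T} (\<lambda>_. lborel))"
    and A: "A \<subseteq> {0..T}" and j: "j \<in> {0..T}" "j \<notin> A"
  shows "marg_nn T q A x = (\<integral>\<^sup>+u. marg_nn T q (insert j A) (x(j := u)) \<partial>lborel)"
proof -
  interpret product_sigma_finite "\<lambda>_::nat. (lborel :: (real^'n) measure)"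
    by (rule product_sigma_finite_lborel)
  define J where "J = {0..T} - insert j A"
  have J: "{0..T} - A = insert j J" "j \<notin> J" "finite J" using j by (auto simp: J_def)
  let ?f = "\<lambda>y. ennreal (q (\<lambda>i. if i \<in> A then x i else y i))"
  have "?f \<in> borel_measurable (PiM (insert j J) (\<lambda>_. lborel))"
    using measurable_comp[OF measurable_fill_coordinates[OF A] q] J(1) by (simp add: comp_def)
  then have "marg_nn T q A x = (\<integral>\<^sup>+u. (\<integral>\<^sup>+y. ?f (y(j := u)) \<partial>(PiM J (\<lambda>_. lborel))) \<partial>lborel)"
    unfolding marg_nn_def J(1) using J(2,3) by (simp add: product_nn_integral_insert_rev)
  also have "\<dots> = (\<integral>\<^sup>+u. marg_nn T q (insert j A) (x(j := u)) \<partial>lborel)"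
  proof -
    have "(\<lambda>i. if i \<in> A then x i else (y(j := u)) i)
        = (\<lambda>i. if i \<in> insert j A then (x(j := u)) i else y i)" for y u
      using j by auto
    then show ?thesis by (simp add: marg_nn_def J_def)
  qed
  finally show ?thesis .
qed

lemma cond_pos_imp_marg_pos:
  fixes q :: "(nat \<Rightarrow> real^'n) \<Rightarrow> real"
  assumes "q \<in> borel_measurable (PiM {0..T} (\<lambda>_. lborel))" "\<And>x. q x \<ge> 0" "B \<subseteq> {0..T}"
    and "cond T q A B x > 0"
  shows "marg T q B x > 0"
proof -
  have "marg T q B x \<ge> 0"
    by (simp add: marg_eq_enn2real_marg_nn[OF assms(1-3)])
  moreover have "marg T q B x \<noteq> 0"
    using assms(4) by (auto simp: cond_def)
  ultimately show ?thesis by simp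
qed

lemma marg_eq_cond_mult_marg:
  "marg T q B x \<noteq> 0 \<Longrightarrow> A \<union> B = C \<Longrightarrow> marg T q C x = cond T q A B x * marg T q B x"
  by (auto simp: cond_def)

lemma cond_gauss_marginalize:
  fixes q :: "(nat \<Rightarrow> real^'n) \<Rightarrow> real" and x :: "nat \<Rightarrow> real^'n"
    and \<mu> a :: "real^'n \<Rightarrow> real^'n"
  assumes q: "q \<in> borel_measurable (PiM {0..T} (\<lambda>_. lborel))" and q_pos: "\<And>x. q x > 0"
    and idx: "t \<in> {1..T}" "s \<in> {1..T}" "s \<noteq> t"
    and marg0_pos: "marg T q {0} x > 0"
    and var_pos: "v > 0" "w > 0"
    and cond_t: "\<And>x. cond T q {t} {0} x = gauss (x t) (\<mu> (x 0)) (v *\<^sub>R mat 1)"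
    and cond_s: "\<And>x. cond T q {s} {t, 0} x = gauss (x s) (a (x 0) + c *\<^sub>R x t) (w *\<^sub>R mat 1)"
  shows "cond T q {s} {0} x = gauss (x s) (a (x 0) + c *\<^sub>R \<mu> (x 0)) ((w + c\<^sup>2 * v) *\<^sub>R mat 1)"
proof -
  define M0 where "M0 = marg T q {0} x"
  have q_nonneg: "\<And>x. q x \<ge> 0" using q_pos less_imp_le by blast
  have sets: "{s, 0} \<subseteq> {0..T}" "insert t {s, 0} \<subseteq> {0..T}" "t \<in> {0..T}" "t \<notin> {s, 0}"
    using idx by auto
  have joint: "marg T q (insert t {s, 0}) (x(t := u))
      = gauss (x s) (a (x 0) + c *\<^sub>R u) (w *\<^sub>R mat 1) * gauss u (\<mu> (x 0)) (v *\<^sub>R mat 1) * M0"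
    for u
  proof -
    have "marg T q {0} (x(t := u)) = M0"
      using idx by (simp add: M0_def marg_fun_upd_notin)
    moreover have "marg T q {t, 0} (x(t := u))
        = cond T q {t} {0} (x(t := u)) * marg T q {0} (x(t := u))"
      by (rule marg_eq_cond_mult_marg) (use calculation marg0_pos in \<open>auto simp: M0_def\<close>)
    ultimately have marg_t: "marg T q {t, 0} (x(t := u)) = gauss u (\<mu> (x 0)) (v *\<^sub>R mat 1) * M0"
      using idx by (simp add: cond_t)
    then have "marg T q {t, 0} (x(t := u)) > 0"
      using marg0_pos var_pos by (simp add: M0_def gauss_scaleR_mat1_pos)
    then have "marg T q (insert t {s, 0}) (x(t := u))
        = cond T q {s} {t, 0} (x(t := u)) * marg T q {t, 0} (x(t := u))"
      by (intro marg_eq_cond_mult_marg) auto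
    then show ?thesis
      using idx by (simp add: marg_t cond_s)
  qed
  have joint_pos: "marg T q (insert t {s, 0}) (x(t := u)) > 0" for u
    using joint marg0_pos var_pos by (simp add: M0_def gauss_scaleR_mat1_pos)
  have "marg_nn T q {s, 0} x = (\<integral>\<^sup>+u. marg_nn T q (insert t {s, 0}) (x(t := u)) \<partial>lborel)"
    using sets by (intro marg_nn_integrate_coordinate[OF q]) auto
  also have "\<dots> = (\<integral>\<^sup>+u. ennreal (gauss (x s) (a (x 0) + c *\<^sub>R u) (w *\<^sub>R mat 1)
                              * gauss u (\<mu> (x 0)) (v *\<^sub>R mat 1)) * ennreal M0 \<partial>lborel)"
    using joint joint_pos marg0_pos var_pos
    by (simp add: marg_nn_eq_ennreal_marg[OF q q_nonneg sets(2)] M0_def ennreal_mult'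
        gauss_scaleR_mat1_pos less_imp_le)
  also have "\<dots> = ennreal (gauss (x s) (a (x 0) + c *\<^sub>R \<mu> (x 0)) ((w + c\<^sup>2 * v) *\<^sub>R mat 1))
                   * ennreal M0"
    using var_pos by (simp add: nn_integral_multc gauss_affine_convolution)
  finally have "marg T q {s, 0} x
      = gauss (x s) (a (x 0) + c *\<^sub>R \<mu> (x 0)) ((w + c\<^sup>2 * v) *\<^sub>R mat 1) * M0"
    using marg_eq_enn2real_marg_nn[OF q q_nonneg sets(1)] marg0_pos var_pos
    by (simp add: M0_def ennreal_mult'[symmetric] gauss_scaleR_mat1_pos less_imp_le
        add_pos_nonneg)
  then show ?thesis
    using marg0_pos by (simp add: cond_def M0_def insert_commute)
qed

lemma ddim_marginal_step:
  fixes q :: "(nat \<Rightarrow> real^'n) \<Rightarrow> real" and x :: "nat \<Rightarrow> real^'n"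
    and sigma abar :: "nat \<Rightarrow> real"
  assumes q: "q \<in> borel_measurable (PiM {0..T} (\<lambda>_. lborel))" and q_pos: "\<And>x. q x > 0"
    and idx: "2 \<le> t" "t \<le> T"
    and marg0_pos: "marg T q {0} x > 0"
    and sigma_pos: "0 < sigma t" and abar: "0 < abar t" "abar t < 1"
    and sigma_le: "(sigma t)\<^sup>2 \<le> 1 - abar (t - 1)"
    and cond_t: "\<And>x. cond T q {t} {0} x
        = gauss (x t) (sqrt (abar t) *\<^sub>R x 0) ((1 - abar t) *\<^sub>R mat 1)"
    and cond_rev: "\<And>x. cond T q {t - 1} {t, 0} x
        = gauss (x (t - 1))
            (sqrt (abar (t - 1)) *\<^sub>R x 0
             + sqrt (1 - abar (t - 1) - (sigma t)\<^sup>2) *\<^sub>R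
                 ((1 / sqrt (1 - abar t)) *\<^sub>R (x t - sqrt (abar t) *\<^sub>R x 0)))
            ((sigma t)\<^sup>2 *\<^sub>R mat 1)"
  shows "cond T q {t - 1} {0} x
    = gauss (x (t - 1)) (sqrt (abar (t - 1)) *\<^sub>R x 0) ((1 - abar (t - 1)) *\<^sub>R mat 1)"
proof -
  define c where "c = sqrt (1 - abar (t - 1) - (sigma t)\<^sup>2) / sqrt (1 - abar t)"
  have "cond T q {t - 1} {0} x
      = gauss (x (t - 1))
          ((sqrt (abar (t - 1)) - c * sqrt (abar t)) *\<^sub>R x 0 + c *\<^sub>R (sqrt (abar t) *\<^sub>R x 0))
          (((sigma t)\<^sup>2 + c\<^sup>2 * (1 - abar t)) *\<^sub>R mat 1)"
  proof (rule cond_gauss_marginalize[OF q q_pos _ _ _ marg0_pos _ _ cond_t])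
    show "cond T q {t - 1} {t, 0} x
        = gauss (x (t - 1)) ((sqrt (abar (t - 1)) - c * sqrt (abar t)) *\<^sub>R x 0 + c *\<^sub>R x t)
            ((sigma t)\<^sup>2 *\<^sub>R mat 1)" for x
      unfolding cond_rev by (simp add: c_def algebra_simps)
  qed (use idx sigma_pos abar in auto)
  moreover have "(sqrt (abar (t - 1)) - c * sqrt (abar t)) *\<^sub>R x 0 + c *\<^sub>R (sqrt (abar t) *\<^sub>R x 0)
      = sqrt (abar (t - 1)) *\<^sub>R x 0"
    by (simp add: algebra_simps)
  moreover have "(sigma t)\<^sup>2 + c\<^sup>2 * (1 - abar t) = 1 - abar (t - 1)"
    using sigma_le abar by (simp add: c_def power_divide)
  ultimately show ?thesis by simp
qed

theorem lemma5p6: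
  fixes M :: "'a measure"
    and T :: nat
    and X :: "(real^'k) option \<Rightarrow> 'a \<Rightarrow> nat \<Rightarrow> real^'n"
    and p :: "(real^'k) option \<Rightarrow> (nat \<Rightarrow> real^'n) \<Rightarrow> real"
    and Pi0 :: "real^'n \<Rightarrow> real"
    and sigma abar :: "nat \<Rightarrow> real"
    and V f :: "real^'k \<Rightarrow> real^'n \<Rightarrow> nat \<Rightarrow> real^'n"
  assumes T_pos: "1 \<le> T"
    and prob: "prob_space M"
    and X_meas: "\<And>\<theta> i. i \<in> {0..T} \<Longrightarrow> (\<lambda>\<omega>. X \<theta> \<omega> i) \<in> borel_measurable M"
    and indep: "prob_space.indep_set M
        (sigma_sets (space M)
           {{\<omega> \<in> space M. X (Some \<theta>) \<omega> i \<in> A} | \<theta> i A. i \<in> {0..T} \<and> A \<in> sets borel})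
        (sigma_sets (space M)
           {{\<omega> \<in> space M. X None \<omega> i \<in> A} | i A. i \<in> {0..T} \<and> A \<in> sets borel})"
    and p_meas: "\<And>\<theta>. p \<theta> \<in> borel_measurable (PiM {0..T} (\<lambda>_. lborel))"
    and p_pos: "\<And>\<theta> x. p \<theta> x > 0"
    and p_density: "\<And>\<theta> B. (\<forall>i\<in>{0..T}. B i \<in> sets borel) \<Longrightarrow>
        emeasure M {\<omega> \<in> space M. \<forall>i\<in>{0..T}. X \<theta> \<omega> i \<in> B i}
        = (\<integral>\<^sup>+ x. indicator (PiE {0..T} B) x * ennreal (p \<theta> x) \<partial>(PiM {0..T} (\<lambda>_. lborel)))"
    and Pi_T: "\<And>\<theta> x. marg T (p (Some \<theta>)) {T} x = Pi0 (x T)"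
    and sigma_range: "\<And>t. t \<in> {1..T} \<Longrightarrow> 0 < sigma t \<and> sigma t < 1"
    and abar_range: "\<And>t. t \<in> {1..T} \<Longrightarrow> 0 < abar t \<and> abar t < 1"
    and sigma_le: "\<And>t. t \<in> {2..T} \<Longrightarrow> (sigma t)\<^sup>2 \<le> 1 - abar (t - 1)"
    and f_def: "\<And>\<theta> x t. t \<in> {1..T} \<Longrightarrow>
        f \<theta> x t = (1 / sqrt (abar t)) *\<^sub>R (x - sqrt (1 - abar t) *\<^sub>R V \<theta> x t)"
    and fwd_factor: "\<And>x. cond T (p None) {1..T} {0} x
        = cond T (p None) {T} {0} x * (\<Prod>s\<in>{2..T}. cond T (p None) {s - 1} {s, 0} x)"
    and fwd_T: "\<And>x. cond T (p None) {T} {0} x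
        = gauss (x T) (sqrt (abar T) *\<^sub>R x 0) ((1 - abar T) *\<^sub>R mat 1)"
    and fwd_rev: "\<And>t x. t \<in> {2..T} \<Longrightarrow> cond T (p None) {t - 1} {t, 0} x
        = gauss (x (t - 1))
            (sqrt (abar (t - 1)) *\<^sub>R x 0
             + sqrt (1 - abar (t - 1) - (sigma t)\<^sup>2) *\<^sub>R
                 ((1 / sqrt (1 - abar t)) *\<^sub>R (x t - sqrt (abar t) *\<^sub>R x 0)))
            ((sigma t)\<^sup>2 *\<^sub>R mat 1)"
    and bwd_factor: "\<And>\<theta> x. marg T (p (Some \<theta>)) {0..T} x
        = marg T (p (Some \<theta>)) {T} x * (\<Prod>s\<in>{1..T}. cond T (p (Some \<theta>)) {s - 1} {s} x)"
    and bwd_step: "\<And>\<theta> t x. t \<in> {2..T} \<Longrightarrow> cond T (p (Some \<theta>)) {t - 1} {t} x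
        = cond T (p None) {t - 1} {t, 0} (x(0 := f \<theta> (x t) t))"
    and bwd_0: "\<And>\<theta> x. cond T (p (Some \<theta>)) {0} {1} x
        = gauss (x 0) (f \<theta> (x 1) 1) ((sigma 1)\<^sup>2 *\<^sub>R mat 1)"
  shows "\<forall>t\<in>{1..T}. \<forall>x. cond T (p None) {t} {0} x
        = gauss (x t) (sqrt (abar t) *\<^sub>R x 0) ((1 - abar t) *\<^sub>R mat 1)"
proof (intro ballI)
  fix t assume t: "t \<in> {1..T}"
  have marg0_pos: "marg T (p None) {0} x > 0" for x
  proof (rule cond_pos_imp_marg_pos[OF p_meas less_imp_le[OF p_pos]])
    show "cond T (p None) {T} {0} x > 0"
      using abar_range[of T] T_pos by (simp add: fwd_T gauss_scaleR_mat1_pos)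
  qed simp
  from t have "t \<le> T" by simp
  then show "\<forall>x. cond T (p None) {t} {0} x
      = gauss (x t) (sqrt (abar t) *\<^sub>R x 0) ((1 - abar t) *\<^sub>R mat 1)"
  proof (induction t rule: inc_induct)
    case base
    show ?case using fwd_T by blast
  next
    case (step n)
    with t have n: "Suc n \<in> {2..T}" by auto
    have "cond T (p None) {Suc n - 1} {0} x = gauss (x (Suc n - 1))
        (sqrt (abar (Suc n - 1)) *\<^sub>R x 0) ((1 - abar (Suc n - 1)) *\<^sub>R mat 1)" for x
      by (rule ddim_marginal_step[where abar = abar and sigma = sigma,
            OF p_meas p_pos _ _ marg0_pos _ _ _ _ _ fwd_rev[OF n]])
        (use n step sigma_range[of "Suc n"] abar_range[of "Suc n"] sigma_le[OF n] in auto)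
    then show ?case by simp
  qed
qed

end
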